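(* Let $T$ be a complete first-order theory in a countable language with monster model $\mathfrak{C}$. For every countable set $A\subseteq\mathfrak{C}$ there is a nice (countable) model $M\prec\mathfrak{C}$ with $A\subseteq M$. In particular, nice models exist.
   Context: $\mathfrak{C}$ is a $\kappa$-saturated, $\kappa$-homogeneous model of $T$ for some $\kappa\geq(2^{|T|})^{+}$; "small" means of cardinality $<\kappa$. The Lascar graph on $\mathfrak{C}^{k}$ joins two distinct tuples lying on a common infinite indiscernible sequence (over $\emptyset$); $d_{k}$ is its graph distance and $\equiv_{L}^{k}$ has as classes its connected components. $\operatorname{Aut}f_{L}(\mathfrak{C})$ is the group generated by automorphisms of $\mathfrak{C}$ fixing pointwise some small elementary substructure. A natural number $m$ bounds $\sigma\in\operatorname{Aut}f_{L}(\mathfrak{C})$ if $d(c,\sigma(c))\leq m$ for every tuple $c$ (of any length). A countable model $M$ is nice if: (1) for all finite tuples $a,b\in M^{k}$ with $a\equiv_{L}^{k}b$ there is $\sigma\in\operatorname{Aut}f_{L}(\mathfrak{C})$ with $\sigma\restriction M\in\operatorname{Aut}(M)$ and $\sigma(a)=b$, whose minimal bound is minimal among all elements of $\operatorname{Aut}f_{L}(\mathfrak{C})$ mapping $a$ to $b$; (2) for every $a\in M^{k}$ and $n<\omega$, if there are $c_{1},c_{2}\in\mathfrak{C}^{k}$ with $c_{1}\equiv_{L}^{k}a\equiv_{L}^{k}c_{2}$ and $d_{k}(c_{1},c_{2})>n$, then there are such $c_{1},c_{2}$ in $M^{k}$; (3) for all $a,b\in M^{k}$, $a'\in M^{k'}$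 and $n<\omega$, if there is $b'$ with $d_{k+k'}(a^{\frown}a',b^{\frown}b')\leq n$ then there is such $b'\in M^{k'}$. *)

theory Defs
  imports Main "HOL-Library.Countable_Set"
begin

datatype 'f trm = Var nat | Fn 'f "'f trm list"

datatype ('f, 'r) fm =
    FF
  | Eq "'f trm" "'f trm"
  | Rel 'r "'f trm list"
  | Neg "('f, 'r) fm"
  | Conj "('f, 'r) fm" "('f, 'r) fm"
  | Ex nat "('f, 'r) fm"

text \<open>A structure for a language: arities of function / relation symbols and their
  interpretations on the universe (the universe of the monster model is the whole type 'a).\<close>
record ('f, 'r, 'a) mstruct =
  arf :: "'f \<Rightarrow> nat"
  arr :: "'r \<Rightarrow> nat"
  Fi  :: "'f \<Rightarrow> 'a list \<Rightarrow> 'a"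
  Ri  :: "'r \<Rightarrow> 'a list \<Rightarrow> bool"

fun wft :: "('f \<Rightarrow> nat) \<Rightarrow> 'f trm \<Rightarrow> bool" where
  "wft af (Var n) = True"
| "wft af (Fn f ts) = (length ts = af f \<and> (\<forall>t\<in>set ts. wft af t))"

fun wf :: "('f, 'r, 'a, 'z) mstruct_scheme \<Rightarrow> ('f, 'r) fm \<Rightarrow> bool" where
  "wf S FF = True"
| "wf S (Eq s t) = (wft (arf S) s \<and> wft (arf S) t)"
| "wf S (Rel r ts) = (length ts = arr S r \<and> (\<forall>t\<in>set ts. wft (arf S) t))"
| "wf S (Neg p) = wf S p"
| "wf S (Conj p q) = (wf S p \<and> wf S q)"
| "wf S (Ex n p) = wf S p"

fun fvt :: "'f trm \<Rightarrow> nat set" where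
  "fvt (Var n) = {n}"
| "fvt (Fn f ts) = (\<Union>t\<in>set ts. fvt t)"

fun fv :: "('f, 'r) fm \<Rightarrow> nat set" where
  "fv FF = {}"
| "fv (Eq s t) = fvt s \<union> fvt t"
| "fv (Rel r ts) = (\<Union>t\<in>set ts. fvt t)"
| "fv (Neg p) = fv p"
| "fv (Conj p q) = fv p \<union> fv q"
| "fv (Ex n p) = fv p - {n}"

fun evalt :: "('f \<Rightarrow> 'a list \<Rightarrow> 'a) \<Rightarrow> (nat \<Rightarrow> 'a) \<Rightarrow> 'f trm \<Rightarrow> 'a" where
  "evalt F v (Var n) = v n"
| "evalt F v (Fn f ts) = F f (map (evalt F v) ts)"

text \<open>Satisfaction, with quantifiers ranging over the domain D (D = UNIV: the monster model;
  D = M: the substructure M).\<close>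
fun sat :: "('f, 'r, 'a, 'z) mstruct_scheme \<Rightarrow> 'a set \<Rightarrow> ('f, 'r) fm \<Rightarrow> (nat \<Rightarrow> 'a) \<Rightarrow> bool" where
  "sat S D FF v = False"
| "sat S D (Eq s t) v = (evalt (Fi S) v s = evalt (Fi S) v t)"
| "sat S D (Rel r ts) v = Ri S r (map (evalt (Fi S) v) ts)"
| "sat S D (Neg p) v = (\<not> sat S D p v)"
| "sat S D (Conj p q) v = (sat S D p v \<and> sat S D q v)"
| "sat S D (Ex n p) v = (\<exists>x\<in>D. sat S D p (v(n := x)))"

definition elem_sub :: "('f, 'r, 'a, 'z) mstruct_scheme \<Rightarrow> 'a set \<Rightarrow> bool" where
  "elem_sub S M \<longleftrightarrow> M \<noteq> {}
     \<and> (\<forall>f xs. length xs = arf S f \<longrightarrow> set xs \<subseteq> M \<longrightarrow> Fi S f xs \<in> M)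
     \<and> (\<forall>\<phi> v. wf S \<phi> \<longrightarrow> (\<forall>n. v n \<in> M) \<longrightarrow> (sat S M \<phi> v \<longleftrightarrow> sat S UNIV \<phi> v))"

definition is_aut :: "('f, 'r, 'a, 'z) mstruct_scheme \<Rightarrow> ('a \<Rightarrow> 'a) \<Rightarrow> bool" where
  "is_aut S \<sigma> \<longleftrightarrow> bij \<sigma>
     \<and> (\<forall>f xs. length xs = arf S f \<longrightarrow> \<sigma> (Fi S f xs) = Fi S f (map \<sigma> xs))
     \<and> (\<forall>r xs. length xs = arr S r \<longrightarrow> (Ri S r (map \<sigma> xs) \<longleftrightarrow> Ri S r xs))"

text \<open>"small": cardinality strictly less than kappa = |K|.\<close>
definition small :: "'k set \<Rightarrow> 'a set \<Rightarrow> bool" where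
  "small K X \<longleftrightarrow> (card_of X, card_of K) \<in> ordLess"

text \<open>A type over A is a set of pairs (formula, assignment) where the free variables other than 0
  are assigned elements of A; variable 0 is the type variable.\<close>
definition saturated :: "('f, 'r, 'a, 'z) mstruct_scheme \<Rightarrow> 'k set \<Rightarrow> bool" where
  "saturated S K \<longleftrightarrow> (\<forall>A \<Phi>. small K A \<longrightarrow>
     \<Phi> \<subseteq> {(\<phi>, v). wf S \<phi> \<and> (\<forall>n\<in>fv \<phi> - {0}. v n \<in> A)} \<longrightarrow>
     (\<forall>\<Phi>0\<subseteq>\<Phi>. finite \<Phi>0 \<longrightarrow> (\<exists>b. \<forall>(\<phi>, v)\<in>\<Phi>0. sat S UNIV \<phi> (v(0 := b)))) \<longrightarrow>
     (\<exists>b. \<forall>(\<phi>, v)\<in>\<Phi>. sat S UNIV \<phi> (v(0 := b))))"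

definition homogeneous :: "('f, 'r, 'a, 'z) mstruct_scheme \<Rightarrow> 'k set \<Rightarrow> bool" where
  "homogeneous S K \<longleftrightarrow> (\<forall>A g. small K A \<longrightarrow>
     (\<forall>\<phi> v. wf S \<phi> \<longrightarrow> (\<forall>n\<in>fv \<phi>. v n \<in> A) \<longrightarrow> (sat S UNIV \<phi> v \<longleftrightarrow> sat S UNIV \<phi> (g \<circ> v))) \<longrightarrow>
     (\<exists>\<sigma>. is_aut S \<sigma> \<and> (\<forall>x\<in>A. \<sigma> x = g x)))"

definition monster :: "('f, 'r, 'a, 'z) mstruct_scheme \<Rightarrow> 'k set \<Rightarrow> bool" where
  "monster S K \<longleftrightarrow>
     (cardSuc (card_of (Pow {\<phi>. wf S \<phi>})), card_of K) \<in> ordLeq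
     \<and> saturated S K \<and> homogeneous S K"

definition indisc :: "('f, 'r, 'a, 'z) mstruct_scheme \<Rightarrow> nat \<Rightarrow> (nat \<Rightarrow> 'a list) \<Rightarrow> bool" where
  "indisc S k a \<longleftrightarrow> (\<forall>i. length (a i) = k) \<and>
     (\<forall>\<phi> is js. wf S \<phi> \<longrightarrow> sorted_wrt (<) is \<longrightarrow> sorted_wrt (<) js \<longrightarrow>
        length is = length js \<longrightarrow> fv \<phi> \<subseteq> {..< k * length is} \<longrightarrow>
        (sat S UNIV \<phi> (\<lambda>n. concat (map a is) ! n) \<longleftrightarrow> sat S UNIV \<phi> (\<lambda>n. concat (map a js) ! n)))"

definition ledge :: "('f, 'r, 'a, 'z) mstruct_scheme \<Rightarrow> nat \<Rightarrow> 'a list \<Rightarrow> 'a list \<Rightarrow> bool" where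
  "ledge S k c d \<longleftrightarrow> c \<noteq> d \<and> (\<exists>a i j. indisc S k a \<and> a i = c \<and> a j = d)"

text \<open>lpath S k n c d  iff  d_k(c, d) <= n.\<close>
fun lpath :: "('f, 'r, 'a, 'z) mstruct_scheme \<Rightarrow> nat \<Rightarrow> nat \<Rightarrow> 'a list \<Rightarrow> 'a list \<Rightarrow> bool" where
  "lpath S k 0 c d = (c = d)"
| "lpath S k (Suc n) c d = (lpath S k n c d \<or> (\<exists>e. length e = k \<and> lpath S k n c e \<and> ledge S k e d))"

definition lascar_eq :: "('f, 'r, 'a, 'z) mstruct_scheme \<Rightarrow> nat \<Rightarrow> 'a list \<Rightarrow> 'a list \<Rightarrow> bool" where
  "lascar_eq S k c d \<longleftrightarrow> (\<exists>n. lpath S k n c d)"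

inductive_set Autf :: "('f, 'r, 'a, 'z) mstruct_scheme \<Rightarrow> 'k set \<Rightarrow> ('a \<Rightarrow> 'a) set"
  for S :: "('f, 'r, 'a, 'z) mstruct_scheme" and K :: "'k set" where
  gen: "\<lbrakk>is_aut S \<sigma>; elem_sub S N; small K N; \<forall>x\<in>N. \<sigma> x = x\<rbrakk> \<Longrightarrow> \<sigma> \<in> Autf S K"
| ident: "id \<in> Autf S K"
| comp: "\<lbrakk>\<sigma> \<in> Autf S K; \<tau> \<in> Autf S K\<rbrakk> \<Longrightarrow> \<sigma> \<circ> \<tau> \<in> Autf S K"
| inverse: "\<sigma> \<in> Autf S K \<Longrightarrow> inv \<sigma> \<in> Autf S K"

definition bounds :: "('f, 'r, 'a, 'z) mstruct_scheme \<Rightarrow> nat \<Rightarrow> ('a \<Rightarrow> 'a) \<Rightarrow> bool" where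
  "bounds S m \<sigma> \<longleftrightarrow> (\<forall>c. lpath S (length c) m c (map \<sigma> c))"

definition nice :: "('f, 'r, 'a, 'z) mstruct_scheme \<Rightarrow> 'k set \<Rightarrow> 'a set \<Rightarrow> bool" where
  "nice S K M \<longleftrightarrow> elem_sub S M \<and> countable M
   \<and> (\<forall>a b. set a \<subseteq> M \<longrightarrow> set b \<subseteq> M \<longrightarrow> length a = length b \<longrightarrow> lascar_eq S (length a) a b \<longrightarrow>
        (\<exists>\<sigma>\<in>Autf S K. \<sigma> ` M = M \<and> map \<sigma> a = b \<and>
           (\<forall>\<tau>\<in>Autf S K. map \<tau> a = b \<longrightarrow> (\<forall>m. bounds S m \<tau> \<longrightarrow> bounds S m \<sigma>))))
   \<and> (\<forall>a n. set a \<subseteq> M \<longrightarrow>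
        (\<exists>c1 c2. length c1 = length a \<and> length c2 = length a \<and> lascar_eq S (length a) c1 a
            \<and> lascar_eq S (length a) a c2 \<and> \<not> lpath S (length a) n c1 c2) \<longrightarrow>
        (\<exists>c1 c2. set c1 \<subseteq> M \<and> set c2 \<subseteq> M \<and> length c1 = length a \<and> length c2 = length a
            \<and> lascar_eq S (length a) c1 a \<and> lascar_eq S (length a) a c2 \<and> \<not> lpath S (length a) n c1 c2))
   \<and> (\<forall>a b a' n. set a \<subseteq> M \<longrightarrow> set b \<subseteq> M \<longrightarrow> set a' \<subseteq> M \<longrightarrow> length a = length b \<longrightarrow>
        (\<exists>b'. length b' = length a' \<and> lpath S (length a + length a') n (a @ a') (b @ b')) \<longrightarrow>
        (\<exists>b'. set b' \<subseteq> M \<and> length b' = length a' \<and> lpath S (length a + length a') n (a @ a') (b @ b')))"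

end

theory Submission
  imports Defs "HOL-Library.Countable"
begin

text \<open>A nice model is a countable elementary substructure closed under countably many
  additional witness operations: for tuples \<open>a\<close>, \<open>b\<close>, \<open>c\<close> from the model it contains the images
  of \<open>c\<close> under a chosen automorphism of least bound in \<open>Autf\<close> sending \<open>a\<close> to \<open>b\<close> and under its
  inverse, as well as witnesses for clauses (2) and (3). Such automorphisms exist whenever \<open>a\<close> and
  \<open>b\<close> are Lascar equivalent, because the two ends \<open>I i\<close>, \<open>I j\<close> of an edge of the Lascar graph are
  conjugate by an automorphism fixing a small model: by saturation and the pigeonhole principle
  there are \<open>c' d'\<close> with the type of \<open>I i @ I j\<close> and a countable model \<open>N\<close> over which \<open>c'\<close> and
  \<open>d'\<close> have the same type; an automorphism moving \<open>c' d'\<close> onto \<open>I i @ I j\<close> carries \<open>N\<close> to a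
  model over which \<open>I i\<close> and \<open>I j\<close> have the same type, and homogeneity does the rest.\<close>

section \<open>Coincidence, renaming and derived formulas\<close>

lemma finite_fvt: "finite (fvt t)"
  by (induction t) auto

lemma finite_fv: "finite (fv \<phi>)"
  by (induction \<phi>) (auto simp: finite_fvt)

lemma evalt_cong: "(\<forall>n\<in>fvt t. v n = v' n) \<Longrightarrow> evalt F v t = evalt F v' t"
  by (induction t) (auto intro!: arg_cong[where f = "F _"])

lemma sat_cong: "(\<forall>n\<in>fv \<phi>. v n = v' n) \<Longrightarrow> sat S D \<phi> v = sat S D \<phi> v'"
proof (induction \<phi> arbitrary: v v')
  case (Eq s t)
  then show ?case using evalt_cong[of s v v'] evalt_cong[of t v v'] by auto
next
  case (Rel r ts)
  then have "map (evalt (Fi S) v) ts = map (evalt (Fi S) v') ts"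
    by (auto intro!: evalt_cong)
  then show ?case by (simp only: sat.simps)
next
  case (Ex n p)
  then have "sat S D p (v(n := x)) = sat S D p (v'(n := x))" for x
    by (intro Ex.IH) auto
  then show ?case by simp
next
  case (Conj p q)
  then have "sat S D p v = sat S D p v'" "sat S D q v = sat S D q v'"
    by (auto intro!: Conj.IH)
  then show ?case by simp
qed auto

fun renamet :: "(nat \<Rightarrow> nat) \<Rightarrow> 'f trm \<Rightarrow> 'f trm" where
  "renamet \<rho> (Var n) = Var (\<rho> n)"
| "renamet \<rho> (Fn f ts) = Fn f (map (renamet \<rho>) ts)"

definition fresh :: "nat set \<Rightarrow> nat" where
  "fresh F = Suc (Max (insert 0 F))"

lemma fresh_notin: "finite F \<Longrightarrow> fresh F \<notin> F"
  unfolding fresh_def by (metis Max_ge Suc_n_not_le_n finite_insert insertCI)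

text \<open>Capture-avoiding: each bound variable is renamed to one that is fresh for the renamed free
  variables of its scope.\<close>
fun rename :: "(nat \<Rightarrow> nat) \<Rightarrow> ('f, 'r) fm \<Rightarrow> ('f, 'r) fm" where
  "rename \<rho> FF = FF"
| "rename \<rho> (Eq s t) = Eq (renamet \<rho> s) (renamet \<rho> t)"
| "rename \<rho> (Rel r ts) = Rel r (map (renamet \<rho>) ts)"
| "rename \<rho> (Neg p) = Neg (rename \<rho> p)"
| "rename \<rho> (Conj p q) = Conj (rename \<rho> p) (rename \<rho> q)"
| "rename \<rho> (Ex n p) = (let m = fresh (\<rho> ` (fv p - {n})) in Ex m (rename (\<rho>(n := m)) p))"

lemma evalt_renamet: "evalt F u (renamet \<rho> t) = evalt F (u \<circ> \<rho>) t"
  by (induction t) (auto intro!: arg_cong[where f = "F _"])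

lemma wft_renamet: "wft af (renamet \<rho> t) = wft af t"
  by (induction t) auto

lemma wf_rename [simp]: "wf S (rename \<rho> \<phi>) = wf S \<phi>"
  by (induction \<phi> arbitrary: \<rho>) (auto simp: wft_renamet Let_def)

lemma fvt_renamet: "fvt (renamet \<rho> t) = \<rho> ` fvt t"
  by (induction t) auto

lemma fv_rename: "fv (rename \<rho> \<phi>) \<subseteq> \<rho> ` fv \<phi>"
proof (induction \<phi> arbitrary: \<rho>)
  case (Ex n p)
  define m where "m = fresh (\<rho> ` (fv p - {n}))"
  have "fv (rename (\<rho>(n := m)) p) - {m} \<subseteq> \<rho> ` (fv p - {n})"
  proof
    fix x assume x: "x \<in> fv (rename (\<rho>(n := m)) p) - {m}"
    then obtain z where "z \<in> fv p" "x = (\<rho>(n := m)) z" using Ex.IH by blast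
    with x show "x \<in> \<rho> ` (fv p - {n})" by (cases "z = n") auto
  qed
  then show ?case by (simp add: Let_def m_def[symmetric])
next
  case (Conj p q)
  then show ?case by fastforce
qed (auto simp: fvt_renamet)

lemma sat_rename: "sat S D (rename \<rho> \<phi>) u = sat S D \<phi> (u \<circ> \<rho>)"
proof (induction \<phi> arbitrary: \<rho> u)
  case (Ex n p)
  define m where "m = fresh (\<rho> ` (fv p - {n}))"
  have m: "m \<notin> \<rho> ` (fv p - {n})"
    unfolding m_def by (rule fresh_notin) (simp add: finite_fv)
  have "sat S D (rename (\<rho>(n := m)) p) (u(m := x)) = sat S D p ((u \<circ> \<rho>)(n := x))" for x
    unfolding Ex.IH by (rule sat_cong) (use m in auto)
  then show ?case by (simp add: Let_def m_def[symmetric] comp_def)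
qed (simp_all add: evalt_renamet comp_def)

fun Exs :: "nat list \<Rightarrow> ('f, 'r) fm \<Rightarrow> ('f, 'r) fm" where
  "Exs [] p = p"
| "Exs (x # xs) p = Ex x (Exs xs p)"

lemma wf_Exs [simp]: "wf S (Exs xs p) = wf S p"
  by (induction xs) auto

lemma fv_Exs [simp]: "fv (Exs xs p) = fv p - set xs"
  by (induction xs) auto

lemma sat_Exs: "sat S UNIV (Exs xs p) u \<longleftrightarrow> (\<exists>w. sat S UNIV p (override_on u w (set xs)))"
proof (induction xs arbitrary: u)
  case (Cons x xs)
  have "override_on (u(x := y)) w (set xs) =
      override_on u (\<lambda>n. if n \<in> set xs then w n else y) (set (x # xs))" for y w
    by (auto simp: override_on_def)
  moreover have "override_on (u(x := w x)) w (set xs) = override_on u w (set (x # xs))" for w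
    by (auto simp: override_on_def)
  ultimately show ?case
    unfolding Exs.simps sat.simps Cons.IH by (metis UNIV_I)
qed simp

fun conjs :: "('f, 'r) fm list \<Rightarrow> ('f, 'r) fm" where
  "conjs [] = Neg FF"
| "conjs (p # ps) = Conj p (conjs ps)"

lemma sat_conjs [simp]: "sat S D (conjs ps) u \<longleftrightarrow> (\<forall>p\<in>set ps. sat S D p u)"
  by (induction ps) auto

lemma wf_conjs [simp]: "wf S (conjs ps) \<longleftrightarrow> (\<forall>p\<in>set ps. wf S p)"
  by (induction ps) auto

definition Iff :: "('f, 'r) fm \<Rightarrow> ('f, 'r) fm \<Rightarrow> ('f, 'r) fm" where
  "Iff p q = Conj (Neg (Conj p (Neg q))) (Neg (Conj q (Neg p)))"

lemma sat_Iff [simp]: "sat S D (Iff p q) u \<longleftrightarrow> (sat S D p u \<longleftrightarrow> sat S D q u)"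
  unfolding Iff_def by auto

lemma wf_Iff [simp]: "wf S (Iff p q) \<longleftrightarrow> wf S p \<and> wf S q"
  unfolding Iff_def by auto

section \<open>Automorphisms and countable elementary substructures\<close>

lemma evalt_aut:
  assumes "is_aut S \<sigma>" "wft (arf S) t"
  shows "evalt (Fi S) (\<lambda>n. \<sigma> (v n)) t = \<sigma> (evalt (Fi S) v t)"
  using assms(2)
proof (induction t)
  case (Fn f ts)
  then have "map (evalt (Fi S) (\<lambda>n. \<sigma> (v n))) ts = map \<sigma> (map (evalt (Fi S) v) ts)"
    by auto
  moreover have "length (map (evalt (Fi S) v) ts) = arf S f"
    using Fn by simp
  ultimately show ?case
    using assms(1) unfolding is_aut_def by (simp only: evalt.simps)
qed simp

lemma sat_aut:
  assumes "is_aut S \<sigma>" "wf S \<phi>"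
  shows "sat S (\<sigma> ` D) \<phi> (\<lambda>n. \<sigma> (v n)) = sat S D \<phi> v"
  using assms(2)
proof (induction \<phi> arbitrary: v)
  case (Eq s t)
  have "inj \<sigma>"
    using assms(1) unfolding is_aut_def bij_def by simp
  then show ?case
    using Eq by (simp add: evalt_aut[OF assms(1)] inj_eq)
next
  case (Rel r ts)
  then have "map (evalt (Fi S) (\<lambda>n. \<sigma> (v n))) ts = map \<sigma> (map (evalt (Fi S) v) ts)"
    by (auto simp: evalt_aut[OF assms(1)])
  moreover have "length (map (evalt (Fi S) v) ts) = arr S r"
    using Rel by simp
  ultimately show ?case
    using assms(1) unfolding is_aut_def by (simp only: sat.simps)
next
  case (Ex n p)
  have upd: "(\<lambda>m. \<sigma> (v m))(n := \<sigma> y) = (\<lambda>m. \<sigma> ((v(n := y)) m))" for y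
    by auto
  have "(\<exists>x\<in>\<sigma> ` D. sat S (\<sigma> ` D) p ((\<lambda>m. \<sigma> (v m))(n := x)))
      \<longleftrightarrow> (\<exists>y\<in>D. sat S (\<sigma> ` D) p (\<lambda>m. \<sigma> ((v(n := y)) m)))"
    unfolding upd[symmetric] by blast
  also have "\<dots> \<longleftrightarrow> (\<exists>y\<in>D. sat S D p (v(n := y)))"
    using Ex by (simp only: wf.simps)
  finally show ?case
    by simp
qed auto

lemma sat_aut_UNIV:
  assumes "is_aut S \<sigma>" "wf S \<phi>"
  shows "sat S UNIV \<phi> (\<lambda>n. \<sigma> (v n)) = sat S UNIV \<phi> v"
proof -
  have "\<sigma> ` UNIV = UNIV"
    using assms(1) unfolding is_aut_def bij_def by simp
  then show ?thesis
    using sat_aut[OF assms, of UNIV v] by simp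
qed

lemma elem_sub_aut:
  assumes "is_aut S h" "elem_sub S M"
  shows "elem_sub S (h ` M)"
proof -
  have b: "bij h"
    using assms unfolding is_aut_def by simp
  have h_inv: "h (inv h x) = x" and inv_h: "inv h (h x) = x" for x
    using b by (simp_all add: bij_is_surj surj_f_inv_f bij_is_inj)
  have "Fi S f xs \<in> h ` M" if "length xs = arf S f" "set xs \<subseteq> h ` M" for f xs
  proof -
    let ?ys = "map (inv h) xs"
    have "set ?ys \<subseteq> M"
      using that(2) inv_h by auto
    then have "Fi S f ?ys \<in> M"
      using assms(2) that(1) unfolding elem_sub_def by simp
    moreover have "Fi S f xs = h (Fi S f ?ys)"
      using assms(1) that(1) h_inv unfolding is_aut_def by (simp add: map_idI)
    ultimately show ?thesis
      by simp
  qed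
  moreover have "sat S (h ` M) \<phi> v = sat S UNIV \<phi> v" if "wf S \<phi>" "\<forall>n. v n \<in> h ` M" for \<phi> v
  proof -
    have v: "v = (\<lambda>n. h ((inv h \<circ> v) n))"
      using h_inv by auto
    have "\<forall>n. (inv h \<circ> v) n \<in> M"
      using that(2) inv_h by (metis comp_apply imageE)
    then have "sat S M \<phi> (inv h \<circ> v) = sat S UNIV \<phi> (inv h \<circ> v)"
      using assms(2) that(1) unfolding elem_sub_def by simp
    then show ?thesis
      using sat_aut[OF assms(1) that(1), of M] sat_aut_UNIV[OF assms(1) that(1)] v by metis
  qed
  ultimately show ?thesis
    using assms(2) unfolding elem_sub_def by auto
qed

lemma Autf_bij: "\<sigma> \<in> Autf S K \<Longrightarrow> bij \<sigma>"
proof (induction rule: Autf.induct)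
  case (comp \<sigma> \<tau>)
  then show ?case using bij_comp[of \<tau> \<sigma>] by (simp add: comp_def)
qed (auto simp: is_aut_def bij_imp_bij_inv bij_id[unfolded id_def])

unbundle cardinal_syntax

instance trm :: (countable) countable by countable_datatype
instance fm :: (countable, countable) countable by countable_datatype

lemma countable_fm:
  assumes "countable (UNIV :: 'f set)" "countable (UNIV :: 'r set)"
  shows "countable (UNIV :: ('f, 'r) fm set)"
proof -
  have "inj (map_fm (to_nat_on (UNIV :: 'f set)) (to_nat_on (UNIV :: 'r set)))"
    using assms by (intro fm.inj_map inj_on_to_nat_on) auto
  then show ?thesis
    by (rule countable_image_inj_on[OF countableI_type])
qed

text \<open>A countable set injects into the formulas via \<open>x \<mapsto> (x\<^sub>n = x\<^sub>0)\<close>, and there are fewer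
  than \<open>\<kappa>\<close> formulas.\<close>
lemma monster_small_countable:
  fixes S :: "('f, 'r, 'a, 'z) mstruct_scheme" and X :: "'a set"
  assumes "monster S K" "countable X"
  shows "small K X"
proof -
  let ?W = "{\<phi>. wf S \<phi>}"
  define f :: "'a \<Rightarrow> ('f, 'r) fm" where "f x = Eq (Var (to_nat_on X x)) (Var 0)" for x
  have "inj_on f X"
    using assms(2) unfolding f_def inj_on_def by (auto dest: inj_on_to_nat_on[THEN inj_onD])
  moreover have "f ` X \<subseteq> ?W"
    unfolding f_def by auto
  ultimately have "|X| \<le>o |?W|"
    using card_of_ordLeq by blast
  also have "|?W| <o |Pow ?W|"
    by (rule card_of_Pow)
  also have "|Pow ?W| <o cardSuc |Pow ?W|"
    by (rule cardSuc_greater[OF card_of_Card_order])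
  also have "cardSuc |Pow ?W| \<le>o |K|"
    using assms(1) unfolding monster_def by simp
  finally show ?thesis
    unfolding small_def .
qed

lemma countable_closure:
  fixes F :: "'a list \<Rightarrow> 'a set"
  assumes "\<And>xs. countable (F xs)" "countable A"
  shows "\<exists>M. A \<subseteq> M \<and> countable M \<and> (\<forall>xs. set xs \<subseteq> M \<longrightarrow> F xs \<subseteq> M)"
proof -
  define stage where "stage = rec_nat A (\<lambda>_ B. B \<union> \<Union> (F ` lists B))"
  have stage_0: "stage 0 = A" and stage_Suc: "stage (Suc n) = stage n \<union> \<Union> (F ` lists (stage n))" for n
    unfolding stage_def by simp_all
  have countable_stage: "countable (stage n)" for n
    by (induction n) (use assms in \<open>simp_all add: stage_0 stage_Suc\<close>)
  have "mono stage"
    unfolding mono_iff_le_Suc by (auto simp: stage_Suc)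
  define M where "M = (\<Union>n. stage n)"
  have list_in_stage: "\<exists>n. set xs \<subseteq> stage n" if "set xs \<subseteq> M" for xs
    using that
  proof (induction xs)
    case (Cons x xs)
    then obtain n k where "set xs \<subseteq> stage n" "x \<in> stage k"
      unfolding M_def by auto
    moreover have "stage n \<subseteq> stage (max n k)" "stage k \<subseteq> stage (max n k)"
      using \<open>mono stage\<close> by (meson max.cobounded1 max.cobounded2 monoD)+
    ultimately have "set (x # xs) \<subseteq> stage (max n k)"
      by auto
    then show ?case by blast
  qed simp
  have "F xs \<subseteq> M" if "set xs \<subseteq> M" for xs
  proof -
    obtain n where "xs \<in> lists (stage n)"
      using list_in_stage[OF \<open>set xs \<subseteq> M\<close>] by blast
    then have "F xs \<subseteq> stage (Suc n)"
      unfolding stage_Suc by blast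
    then show ?thesis
      unfolding M_def by blast
  qed
  moreover have "A \<subseteq> M"
    unfolding M_def using stage_0 by blast
  moreover have "countable M"
    unfolding M_def using countable_stage by auto
  ultimately show ?thesis by blast
qed

text \<open>Reads a list as an assignment; beyond the end the junk value \<open>hd xs\<close> is used.\<close>
definition list_asg :: "'a list \<Rightarrow> nat \<Rightarrow> 'a" where
  "list_asg xs i = (if i < length xs then xs ! i else hd xs)"

text \<open>Closure under these witnesses is the Tarski--Vaught criterion.\<close>
definition skolem_witnesses :: "('f, 'r, 'a, 'z) mstruct_scheme \<Rightarrow> 'a list \<Rightarrow> 'a set" where
  "skolem_witnesses S xs =
     (\<lambda>(p, n). SOME x. sat S UNIV p ((list_asg xs)(n := x)))
       ` {(p, n). \<exists>x. sat S UNIV p ((list_asg xs)(n := x))}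
     \<union> (\<lambda>f. Fi S f xs) ` {f. length xs = arf S f}"

lemma countable_skolem_witnesses:
  fixes S :: "('f, 'r, 'a, 'z) mstruct_scheme"
  assumes "countable (UNIV :: 'f set)" "countable (UNIV :: 'r set)"
  shows "countable (skolem_witnesses S xs)"
proof -
  have "countable (UNIV :: (('f, 'r) fm \<times> nat) set)"
    using countable_fm[OF assms] by (simp add: countable_SIGMA[of UNIV "\<lambda>_. UNIV", simplified])
  then have "countable {(p :: ('f, 'r) fm, n). \<exists>x. sat S UNIV p ((list_asg xs)(n := x))}"
    by (rule countable_subset[rotated]) auto
  moreover have "countable {f. length xs = arf S f}"
    using assms(1) by (rule countable_subset[rotated]) auto
  ultimately show ?thesis
    unfolding skolem_witnesses_def by auto
qed

lemma skolem_witness_exists: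
  assumes closed: "\<forall>xs. set xs \<subseteq> M \<longrightarrow> skolem_witnesses S xs \<subseteq> M"
    and "\<forall>m. v m \<in> M" "sat S UNIV p (v(n := x))"
  shows "\<exists>y\<in>M. sat S UNIV p (v(n := y))"
proof -
  define N where "N = Suc (Max (insert n (fv p)))"
  have below_N: "\<forall>z\<in>insert n (fv p). z < N"
    unfolding N_def using finite_fv[of p] by (meson Max_ge finite_insert le_imp_less_Suc)
  define xs where "xs = map v [0..<N]"
  have "set xs \<subseteq> M"
    unfolding xs_def using assms(2) by auto
  have agree: "sat S UNIV p ((list_asg xs)(n := y)) = sat S UNIV p (v(n := y))" for y
    by (rule sat_cong) (use below_N in \<open>auto simp: xs_def list_asg_def\<close>)
  let ?y = "SOME y. sat S UNIV p ((list_asg xs)(n := y))"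
  have "sat S UNIV p ((list_asg xs)(n := ?y))"
    using assms(3) agree by (metis someI)
  moreover have "?y \<in> skolem_witnesses S xs"
    unfolding skolem_witnesses_def using assms(3) agree
    by (intro UnI1 image_eqI[where x = "(p, n)"]) auto
  ultimately show ?thesis
    using closed \<open>set xs \<subseteq> M\<close> agree by blast
qed

lemma elem_sub_if_closed:
  assumes "M \<noteq> {}" and closed: "\<forall>xs. set xs \<subseteq> M \<longrightarrow> skolem_witnesses S xs \<subseteq> M"
  shows "elem_sub S M"
proof -
  have "Fi S f xs \<in> M" if "length xs = arf S f" "set xs \<subseteq> M" for f xs
    using closed that unfolding skolem_witnesses_def by blast
  moreover have "sat S M \<phi> v = sat S UNIV \<phi> v" if "\<forall>n. v n \<in> M" for \<phi> v
    using that
  proof (induction \<phi> arbitrary: v)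
    case (Ex n p)
    have "sat S M p (v(n := y)) = sat S UNIV p (v(n := y))" if "y \<in> M" for y
      using Ex.prems that by (intro Ex.IH) auto
    then have "sat S M (Ex n p) v \<longleftrightarrow> (\<exists>y\<in>M. sat S UNIV p (v(n := y)))"
      by simp
    also have "\<dots> \<longleftrightarrow> sat S UNIV (Ex n p) v"
      using skolem_witness_exists[OF closed Ex.prems] by auto
    finally show ?case .
  qed auto
  ultimately show ?thesis
    unfolding elem_sub_def using assms(1) by blast
qed

lemma countable_elem_sub_closure:
  fixes S :: "('f, 'r, 'a, 'z) mstruct_scheme" and G :: "'a list \<Rightarrow> 'a set"
  assumes "countable (UNIV :: 'f set)" "countable (UNIV :: 'r set)"
    and "\<And>xs. countable (G xs)" "countable A"
  shows "\<exists>M. A \<subseteq> M \<and> countable M \<and> elem_sub S M \<and> (\<forall>xs. set xs \<subseteq> M \<longrightarrow> G xs \<subseteq> M)"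
proof -
  have "\<exists>M. insert undefined A \<subseteq> M \<and> countable M
      \<and> (\<forall>xs. set xs \<subseteq> M \<longrightarrow> skolem_witnesses S xs \<union> G xs \<subseteq> M)"
    using countable_skolem_witnesses[OF assms(1,2)] assms(3,4) by (intro countable_closure) auto
  then obtain M where M: "insert undefined A \<subseteq> M" "countable M"
    "\<forall>xs. set xs \<subseteq> M \<longrightarrow> skolem_witnesses S xs \<union> G xs \<subseteq> M"
    by blast
  then have "elem_sub S M"
    by (intro elem_sub_if_closed) auto
  then show ?thesis
    using M by blast
qed

section \<open>Realising types in several variables\<close>

text \<open>The formula saying that the variables below \<open>m\<close> can be chosen to satisfy all of \<open>ps\<close>,
  with variable \<open>m\<close> moved to 0 so that it is a 1-type in the sense of \<open>saturated\<close>.\<close>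
definition project_to_var0 :: "nat \<Rightarrow> ('f, 'r) fm list \<Rightarrow> ('f, 'r) fm" where
  "project_to_var0 m ps = rename (id(0 := m, m := 0)) (Exs [0..<m] (conjs ps))"

lemma sat_project_to_var0:
  "sat S UNIV (project_to_var0 m ps) ((v \<circ> id(0 := m, m := 0))(0 := b)) \<longleftrightarrow>
    (\<exists>w. \<forall>\<phi>\<in>set ps. sat S UNIV \<phi> (override_on (v(m := b)) w {..<m}))"
proof -
  have "(v \<circ> id(0 := m, m := 0))(0 := b) \<circ> id(0 := m, m := 0) = v(m := b)"
    by auto
  then show ?thesis
    by (simp add: project_to_var0_def sat_rename sat_Exs atLeast0LessThan)
qed

lemma fv_project_to_var0: "n \<in> fv (project_to_var0 m ps) \<Longrightarrow> n \<noteq> 0 \<Longrightarrow> m < n"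
  using fv_rename[of "id(0 := m, m := 0)" "Exs [0..<m] (conjs ps)"]
  by (auto simp: project_to_var0_def split: if_splits)

lemma saturated_realize_last:
  fixes S :: "('f, 'r, 'a, 'z) mstruct_scheme" and \<Phi> :: "('f, 'r) fm set"
  assumes "saturated S K" "small K (v ` {Suc m..})" "\<forall>\<phi>\<in>\<Phi>. wf S \<phi>"
    and fin_sat: "\<And>\<Phi>0. \<Phi>0 \<subseteq> \<Phi> \<Longrightarrow> finite \<Phi>0 \<Longrightarrow>
      \<exists>w. \<forall>\<phi>\<in>\<Phi>0. sat S UNIV \<phi> (override_on v w {..<Suc m})"
  shows "\<exists>b. \<forall>\<Phi>0\<subseteq>\<Phi>. finite \<Phi>0 \<longrightarrow>
      (\<exists>w. \<forall>\<phi>\<in>\<Phi>0. sat S UNIV \<phi> (override_on (v(m := b)) w {..<m}))"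
proof -
  let ?u = "v \<circ> id(0 := m, m := 0)"
  define \<Theta> where "\<Theta> = {(project_to_var0 m ps, ?u) | ps. set ps \<subseteq> \<Phi>}"
  have "?u n \<in> v ` {Suc m..}" if "n \<in> fv (project_to_var0 m ps) - {0}" for n ps
    using fv_project_to_var0[of n m ps] that by auto
  moreover have "wf S (project_to_var0 m ps)" if "set ps \<subseteq> \<Phi>" for ps
    using assms(3) that by (auto simp: project_to_var0_def)
  ultimately have \<Theta>_type: "\<Theta> \<subseteq> {(\<phi>, u). wf S \<phi> \<and> (\<forall>n\<in>fv \<phi> - {0}. u n \<in> v ` {Suc m..})}"
    unfolding \<Theta>_def by blast
  have \<Theta>_fin_sat: "\<exists>b. \<forall>(\<phi>, u)\<in>\<Theta>0. sat S UNIV \<phi> (u(0 := b))" if "\<Theta>0 \<subseteq> \<Theta>" "finite \<Theta>0" for \<Theta>0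
  proof -
    have "\<forall>x\<in>\<Theta>0. \<exists>ps. x = (project_to_var0 m ps, ?u) \<and> set ps \<subseteq> \<Phi>"
      using that(1) unfolding \<Theta>_def by blast
    then obtain ps where ps: "\<And>x. x \<in> \<Theta>0 \<Longrightarrow> x = (project_to_var0 m (ps x), ?u) \<and> set (ps x) \<subseteq> \<Phi>"
      by metis
    have "finite (\<Union>x\<in>\<Theta>0. set (ps x))" "(\<Union>x\<in>\<Theta>0. set (ps x)) \<subseteq> \<Phi>"
      using ps that(2) by auto
    then obtain w where w: "\<forall>\<phi>\<in>(\<Union>x\<in>\<Theta>0. set (ps x)). sat S UNIV \<phi> (override_on v w {..<Suc m})"
      using fin_sat by presburger
    have "override_on v w {..<Suc m} = override_on (v(m := w m)) w {..<m}"
      by (auto simp: override_on_def)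
    then have "sat S UNIV (project_to_var0 m (ps x)) (?u(0 := w m))" if "x \<in> \<Theta>0" for x
      unfolding sat_project_to_var0 using w that by (intro exI[of _ w]) auto
    then have "\<forall>(\<phi>, u)\<in>\<Theta>0. sat S UNIV \<phi> (u(0 := w m))"
      using ps by (metis (mono_tags, lifting) case_prodI2 prod.inject)
    then show ?thesis ..
  qed
  obtain b where b: "\<forall>(\<phi>, u)\<in>\<Theta>. sat S UNIV \<phi> (u(0 := b))"
    using assms(1)[unfolded saturated_def, rule_format, OF assms(2) \<Theta>_type \<Theta>_fin_sat] by blast
  have "\<exists>w. \<forall>\<phi>\<in>set ps. sat S UNIV \<phi> (override_on (v(m := b)) w {..<m})" if "set ps \<subseteq> \<Phi>" for ps
    using b that unfolding \<Theta>_def sat_project_to_var0[symmetric] by blast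
  then show ?thesis
    by (metis finite_list)
qed

lemma monster_realize:
  assumes "monster S K" "countable (v ` {m..})" "\<forall>\<phi>\<in>\<Phi>. wf S \<phi>"
    and "\<And>\<Phi>0. \<Phi>0 \<subseteq> \<Phi> \<Longrightarrow> finite \<Phi>0 \<Longrightarrow> \<exists>w. \<forall>\<phi>\<in>\<Phi>0. sat S UNIV \<phi> (override_on v w {..<m})"
  shows "\<exists>w. \<forall>\<phi>\<in>\<Phi>. sat S UNIV \<phi> (override_on v w {..<m})"
  using assms(2,4)
proof (induction m arbitrary: v)
  case 0
  have "sat S UNIV \<phi> v" if "\<phi> \<in> \<Phi>" for \<phi>
    using "0.prems"(2)[of "{\<phi>}"] that by simp
  then show ?case
    by simp
next
  case (Suc m)
  have "small K (v ` {Suc m..})"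
    using Suc.prems(1) assms(1) by (intro monster_small_countable) auto
  then obtain b where b: "\<forall>\<Phi>0\<subseteq>\<Phi>. finite \<Phi>0 \<longrightarrow>
      (\<exists>w. \<forall>\<phi>\<in>\<Phi>0. sat S UNIV \<phi> (override_on (v(m := b)) w {..<m}))"
    using saturated_realize_last[OF _ _ assms(3) Suc.prems(2)] assms(1)
    unfolding monster_def by blast
  have "(v(m := b)) ` {m..} \<subseteq> insert b (v ` {Suc m..})"
  proof (rule image_subsetI)
    fix n assume "n \<in> {m..}"
    then show "(v(m := b)) n \<in> insert b (v ` {Suc m..})"
      by (cases "n = m") auto
  qed
  moreover have "countable (v ` {Suc m..})"
    using Suc.prems(1) by (rule countable_subset[rotated]) auto
  ultimately have "countable ((v(m := b)) ` {m..})"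
    using countable_subset by blast
  then obtain w where "\<forall>\<phi>\<in>\<Phi>. sat S UNIV \<phi> (override_on (v(m := b)) w {..<m})"
    using Suc.IH b by blast
  moreover have "override_on (v(m := b)) w {..<m} = override_on v (w(m := b)) {..<Suc m}"
    by (auto simp: override_on_def)
  ultimately show ?case
    by metis
qed

section \<open>Types over a set and homogeneity\<close>

text \<open>The tuple occupies the variables below its length, the parameters from \<open>N\<close> the variables
  above.\<close>
definition same_type_over :: "('f, 'r, 'a, 'z) mstruct_scheme \<Rightarrow> 'a set \<Rightarrow> 'a list \<Rightarrow> 'a list \<Rightarrow> bool" where
  "same_type_over S N c d \<longleftrightarrow> length c = length d \<and>
     (\<forall>\<phi> e. wf S \<phi> \<longrightarrow> (\<forall>n\<in>fv \<phi>. length c \<le> n \<longrightarrow> e n \<in> N) \<longrightarrow>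
        (sat S UNIV \<phi> (override_on e ((!) c) {..<length c}) \<longleftrightarrow>
         sat S UNIV \<phi> (override_on e ((!) d) {..<length c})))"

lemma same_type_overD:
  assumes "same_type_over S N c d" "wf S \<phi>" "\<forall>n\<in>fv \<phi>. length c \<le> n \<longrightarrow> e n \<in> N"
  shows "sat S UNIV \<phi> (override_on e ((!) c) {..<length c}) \<longleftrightarrow>
    sat S UNIV \<phi> (override_on e ((!) d) {..<length c})"
  using assms unfolding same_type_over_def by blast

lemma same_type_over_nth_eq:
  assumes "same_type_over S N c d" "t < length c" "s < length c" "c ! t = c ! s"
  shows "d ! t = d ! s"
proof -
  have "sat S UNIV (Eq (Var t) (Var s)) (override_on e ((!) c) {..<length c})
      \<longleftrightarrow> sat S UNIV (Eq (Var t) (Var s)) (override_on e ((!) d) {..<length c})" for e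
    using assms(2,3) by (intro same_type_overD[OF assms(1)]) auto
  then show ?thesis
    using assms(2-4) by simp
qed

lemma same_type_over_nth_param:
  assumes "same_type_over S N c d" "t < length c" "c ! t \<in> N"
  shows "d ! t = c ! t"
proof -
  let ?e = "\<lambda>_. c ! t"
  have "sat S UNIV (Eq (Var t) (Var (length c))) (override_on ?e ((!) c) {..<length c})
      \<longleftrightarrow> sat S UNIV (Eq (Var t) (Var (length c))) (override_on ?e ((!) d) {..<length c})"
    using assms(2,3) by (intro same_type_overD[OF assms(1)]) auto
  then show ?thesis
    using assms(2) by simp
qed

definition map_over :: "'a set \<Rightarrow> 'a list \<Rightarrow> 'a list \<Rightarrow> 'a \<Rightarrow> 'a" where
  "map_over N c d x = (if x \<in> N then x else d ! (LEAST t. t < length c \<and> c ! t = x))"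

lemma least_index_nth:
  assumes "x \<in> set c"
  shows "(LEAST t. t < length c \<and> c ! t = x) < length c" "c ! (LEAST t. t < length c \<and> c ! t = x) = x"
  using LeastI_ex[of "\<lambda>t. t < length c \<and> c ! t = x"] assms unfolding in_set_conv_nth by auto

text \<open>Renaming the variables so that parameters from \<open>N\<close> lie above the tuple reduces
  elementarity to the definition of \<open>same_type_over\<close>.\<close>
lemma same_type_over_map_over_elementary:
  assumes "same_type_over S N c d" "wf S \<phi>" "\<forall>n\<in>fv \<phi>. u n \<in> N \<union> set c"
  shows "sat S UNIV \<phi> u \<longleftrightarrow> sat S UNIV \<phi> (map_over N c d \<circ> u)"
proof -
  let ?k = "length c"
  define \<rho> where "\<rho> n = (if u n \<in> N then ?k + n else LEAST t. t < ?k \<and> c ! t = u n)" for n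
  define e where "e m = u (m - ?k)" for m
  have "\<forall>n\<in>fv (rename \<rho> \<phi>). ?k \<le> n \<longrightarrow> e n \<in> N"
    using fv_rename[of \<rho> \<phi>] assms(3) least_index_nth[of _ c] by (force simp: \<rho>_def e_def)
  then have "sat S UNIV (rename \<rho> \<phi>) (override_on e ((!) c) {..<?k})
      \<longleftrightarrow> sat S UNIV (rename \<rho> \<phi>) (override_on e ((!) d) {..<?k})"
    using same_type_overD[OF assms(1) wf_rename[THEN iffD2, OF assms(2)]] by blast
  moreover have "sat S UNIV (rename \<rho> \<phi>) (override_on e ((!) c) {..<?k}) \<longleftrightarrow> sat S UNIV \<phi> u"
    unfolding sat_rename using assms(3) least_index_nth[of _ c]
    by (intro sat_cong) (auto simp: \<rho>_def e_def override_on_def)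
  moreover have "sat S UNIV (rename \<rho> \<phi>) (override_on e ((!) d) {..<?k}) \<longleftrightarrow>
      sat S UNIV \<phi> (map_over N c d \<circ> u)"
    unfolding sat_rename using assms(3) least_index_nth[of _ c]
    by (intro sat_cong) (auto simp: \<rho>_def e_def map_over_def override_on_def)
  ultimately show ?thesis
    by simp
qed

lemma same_type_over_map_over_nth:
  assumes "same_type_over S N c d" "t < length c"
  shows "map_over N c d (c ! t) = d ! t"
proof (cases "c ! t \<in> N")
  case True
  then show ?thesis
    using same_type_over_nth_param[OF assms] by (simp add: map_over_def)
next
  case False
  have "d ! (LEAST s. s < length c \<and> c ! s = c ! t) = d ! t"
    using assms(2) least_index_nth[of "c ! t" c] by (intro same_type_over_nth_eq[OF assms(1)]) auto
  then show ?thesis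
    using False by (simp add: map_over_def)
qed

lemma aut_of_same_type_over:
  assumes "homogeneous S K" "small K (N \<union> set c)" "same_type_over S N c d"
  shows "\<exists>\<sigma>. is_aut S \<sigma> \<and> (\<forall>x\<in>N. \<sigma> x = x) \<and> map \<sigma> c = d"
proof -
  obtain \<sigma> where \<sigma>: "is_aut S \<sigma>" "\<forall>x\<in>N \<union> set c. \<sigma> x = map_over N c d x"
    using assms(1,2) same_type_over_map_over_elementary[OF assms(3)]
    unfolding homogeneous_def by blast
  then have "map \<sigma> c = d"
    using assms(3) same_type_over_map_over_nth[OF assms(3)]
    unfolding same_type_over_def by (auto intro: nth_equalityI)
  moreover have "\<forall>x\<in>N. \<sigma> x = x"
    using \<sigma>(2) by (simp add: map_over_def)
  ultimately show ?thesis
    using \<sigma>(1) by blast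
qed

lemma same_type_over_aut:
  assumes "is_aut S h" "same_type_over S N c d"
  shows "same_type_over S (h ` N) (map h c) (map h d)"
proof -
  have b: "bij h"
    using assms(1) unfolding is_aut_def by simp
  have h_inv: "h (inv h x) = x" and inv_h: "inv h (h x) = x" for x
    using b by (simp_all add: bij_is_surj surj_f_inv_f bij_is_inj)
  let ?k = "length c"
  have "sat S UNIV \<phi> (override_on e ((!) (map h c)) {..<?k}) \<longleftrightarrow>
      sat S UNIV \<phi> (override_on e ((!) (map h d)) {..<?k})"
    if "wf S \<phi>" "\<forall>n\<in>fv \<phi>. ?k \<le> n \<longrightarrow> e n \<in> h ` N" for \<phi> e
  proof -
    let ?e = "inv h \<circ> e"
    have lift: "override_on e ((!) (map h x)) {..<?k} = (\<lambda>n. h (override_on ?e ((!) x) {..<?k} n))"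
      if "length x = ?k" for x
      using that h_inv by (auto simp: override_on_def)
    have "\<forall>n\<in>fv \<phi>. ?k \<le> n \<longrightarrow> ?e n \<in> N"
      using that(2) inv_h by force
    then show ?thesis
      using same_type_overD[OF assms(2) that(1)] assms(2) lift[of c] lift[of d]
        sat_aut_UNIV[OF assms(1) that(1)]
      unfolding same_type_over_def by simp
  qed
  then show ?thesis
    using assms(2) unfolding same_type_over_def by simp
qed

section \<open>Indiscernible sequences and the Lascar graph\<close>

definition swap_blocks :: "nat \<Rightarrow> nat \<Rightarrow> nat" where
  "swap_blocks k n = (if n < k then n + k else if n < 2 * k then n - k else n)"

lemma sat_rename_swap_blocks:
  assumes "length a = k" "length b = k" "fv \<theta> \<subseteq> {..<2 * k}"
  shows "sat S UNIV (rename (swap_blocks k) \<theta>) ((!) (a @ b)) = sat S UNIV \<theta> ((!) (b @ a))"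
  unfolding sat_rename using assms by (intro sat_cong) (auto simp: swap_blocks_def nth_append)

lemma fv_rename_swap_blocks: "fv \<theta> \<subseteq> {..<2 * k} \<Longrightarrow> fv (rename (swap_blocks k) \<theta>) \<subseteq> {..<2 * k}"
  using fv_rename[of "swap_blocks k" \<theta>] by (auto simp: swap_blocks_def)

lemma indisc_pair:
  assumes "indisc S k I" "p < q" "i < j" "wf S \<theta>" "fv \<theta> \<subseteq> {..<2 * k}"
  shows "sat S UNIV \<theta> ((!) (I p @ I q)) = sat S UNIV \<theta> ((!) (I i @ I j))"
proof -
  have "sat S UNIV \<theta> ((!) (concat (map I [p, q]))) = sat S UNIV \<theta> ((!) (concat (map I [i, j])))"
    using assms unfolding indisc_def by (intro conjunct2[OF assms(1)[unfolded indisc_def], rule_format]) auto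
  then show ?thesis
    by simp
qed

lemma indisc_pair_any_order:
  assumes "indisc S k I" "p < q" "i \<noteq> j" "wf S \<theta>" "fv \<theta> \<subseteq> {..<2 * k}"
  shows "sat S UNIV \<theta> ((!) (if i < j then I p @ I q else I q @ I p)) = sat S UNIV \<theta> ((!) (I i @ I j))"
proof (cases "i < j")
  case True
  then show ?thesis
    using indisc_pair[OF assms(1,2) True assms(4,5)] by simp
next
  case False
  then have "j < i"
    using assms(3) by simp
  have len: "length (I n) = k" for n
    using assms(1) unfolding indisc_def by simp
  have "sat S UNIV \<theta> ((!) (I q @ I p)) = sat S UNIV (rename (swap_blocks k) \<theta>) ((!) (I p @ I q))"
    using sat_rename_swap_blocks[OF len len assms(5)] by metis
  also have "\<dots> = sat S UNIV (rename (swap_blocks k) \<theta>) ((!) (I j @ I i))"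
    using assms(4,5) by (intro indisc_pair[OF assms(1,2) \<open>j < i\<close>]) (simp_all add: fv_rename_swap_blocks)
  also have "\<dots> = sat S UNIV \<theta> ((!) (I i @ I j))"
    using sat_rename_swap_blocks[OF len len assms(5)] by metis
  finally show ?thesis
    using False by simp
qed

text \<open>Pigeonhole: among the infinitely many members of the sequence two have the same
  \<open>\<Psi>\<close>-type over the parameters \<open>v\<close>, and by indiscernibility the pair, in the order of \<open>i\<close>
  and \<open>j\<close>, has the type of \<open>I i @ I j\<close>.\<close>
lemma indisc_fin_sat_swap_invariant:
  assumes "indisc S k I" "i \<noteq> j" "finite \<Psi>"
    and \<Theta>: "\<forall>\<theta>\<in>\<Theta>. wf S \<theta> \<and> fv \<theta> \<subseteq> {..<2 * k} \<and> sat S UNIV \<theta> ((!) (I i @ I j))"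
  shows "\<exists>x y. length x = k \<and> length y = k \<and> (\<forall>\<theta>\<in>\<Theta>. sat S UNIV \<theta> ((!) (x @ y))) \<and>
    (\<forall>\<psi>\<in>\<Psi>. sat S UNIV \<psi> (override_on v ((!) x) {..<k}) \<longleftrightarrow> sat S UNIV \<psi> (override_on v ((!) y) {..<k}))"
proof -
  define col where "col p = {\<psi>\<in>\<Psi>. sat S UNIV \<psi> (override_on v ((!) (I p)) {..<k})}" for p
  have "finite (range col)"
    using assms(3) by (rule finite_subset[rotated, OF finite_Pow_iff[THEN iffD2]]) (auto simp: col_def)
  then have "\<not> inj col"
    using finite_imageD infinite_UNIV_nat by blast
  then obtain p q where "p < q" "col p = col q"
    unfolding inj_def by (metis linorder_neqE_nat)
  define x where "x = (if i < j then I p else I q)"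
  define y where "y = (if i < j then I q else I p)"
  have "length x = k" "length y = k"
    using assms(1) unfolding indisc_def x_def y_def by simp_all
  moreover have "\<forall>\<theta>\<in>\<Theta>. sat S UNIV \<theta> ((!) (x @ y))"
    using \<Theta> indisc_pair_any_order[OF assms(1) \<open>p < q\<close> assms(2)]
    unfolding x_def y_def by (auto split: if_splits)
  moreover have "\<forall>\<psi>\<in>\<Psi>. sat S UNIV \<psi> (override_on v ((!) x) {..<k}) \<longleftrightarrow>
      sat S UNIV \<psi> (override_on v ((!) y) {..<k})"
    using \<open>col p = col q\<close> unfolding col_def x_def y_def by (auto simp: set_eq_iff)
  ultimately show ?thesis
    by blast
qed

text \<open>Realisations of \<open>swap_type S k T\<close> are realisations of the type of \<open>T\<close> whose two halves of
  length \<open>k\<close> have the same type over the parameters placed from \<open>2 * k\<close> on.\<close>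
definition swap_type :: "('f, 'r, 'a, 'z) mstruct_scheme \<Rightarrow> nat \<Rightarrow> 'a list \<Rightarrow> ('f, 'r) fm set" where
  "swap_type S k T = {\<theta>. wf S \<theta> \<and> fv \<theta> \<subseteq> {..<2 * k} \<and> sat S UNIV \<theta> ((!) T)}
     \<union> (\<lambda>\<psi>. Iff \<psi> (rename (swap_blocks k) \<psi>)) ` {\<psi>. wf S \<psi> \<and> fv \<psi> \<inter> {k..<2 * k} = {}}"

lemma override_append_swap_blocks:
  assumes "length x = k" "length y = k" "n < k \<or> 2 * k \<le> n"
  shows "override_on v ((!) (x @ y)) {..<2 * k} n = override_on v ((!) x) {..<k} n"
    and "override_on v ((!) (x @ y)) {..<2 * k} (swap_blocks k n) = override_on v ((!) y) {..<k} n"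
  using assms by (auto simp: override_on_def swap_blocks_def nth_append)

lemma indisc_swap_type_fin_sat:
  fixes S :: "('f, 'r, 'a, 'z) mstruct_scheme"
  assumes "indisc S k I" "i \<noteq> j" "\<Phi>0 \<subseteq> swap_type S k (I i @ I j)" "finite \<Phi>0"
  shows "\<exists>w. \<forall>\<phi>\<in>\<Phi>0. sat S UNIV \<phi> (override_on v w {..<2 * k})"
proof -
  define swap_inv :: "('f, 'r) fm \<Rightarrow> ('f, 'r) fm" where
    "swap_inv \<psi> = Iff \<psi> (rename (swap_blocks k) \<psi>)" for \<psi>
  define \<Psi> where "\<Psi> = {\<psi>. wf S \<psi> \<and> fv \<psi> \<inter> {k..<2 * k} = {} \<and> swap_inv \<psi> \<in> \<Phi>0}"
  have "inj_on swap_inv \<Psi>" "swap_inv ` \<Psi> \<subseteq> \<Phi>0"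
    unfolding inj_on_def swap_inv_def Iff_def \<Psi>_def by auto
  then have "finite \<Psi>"
    using assms(4) finite_imageD finite_subset by blast
  then obtain x y where xy: "length x = k" "length y = k"
    "\<And>\<theta>. wf S \<theta> \<Longrightarrow> fv \<theta> \<subseteq> {..<2 * k} \<Longrightarrow> sat S UNIV \<theta> ((!) (I i @ I j)) \<Longrightarrow>
      sat S UNIV \<theta> ((!) (x @ y))"
    "\<forall>\<psi>\<in>\<Psi>. sat S UNIV \<psi> (override_on v ((!) x) {..<k}) \<longleftrightarrow> sat S UNIV \<psi> (override_on v ((!) y) {..<k})"
    using indisc_fin_sat_swap_invariant[OF assms(1,2),
        of \<Psi> "{\<theta>. wf S \<theta> \<and> fv \<theta> \<subseteq> {..<2 * k} \<and> sat S UNIV \<theta> ((!) (I i @ I j))}"] by blast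
  let ?U = "override_on v ((!) (x @ y)) {..<2 * k}"
  have "sat S UNIV \<phi> ?U" if "\<phi> \<in> \<Phi>0" for \<phi>
  proof -
    consider "wf S \<phi>" "fv \<phi> \<subseteq> {..<2 * k}" "sat S UNIV \<phi> ((!) (I i @ I j))"
      | \<psi> where "\<phi> = swap_inv \<psi>" "\<psi> \<in> \<Psi>"
      using assms(3) \<open>\<phi> \<in> \<Phi>0\<close> unfolding swap_type_def \<Psi>_def swap_inv_def by blast
    then show ?thesis
    proof cases
      case 1
      then have "sat S UNIV \<phi> ?U = sat S UNIV \<phi> ((!) (x @ y))"
        by (intro sat_cong) (auto simp: override_on_def)
      then show ?thesis
        using 1 xy(3) by simp
    next
      case 2
      then have "n < k \<or> 2 * k \<le> n" if "n \<in> fv \<psi>" for n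
        using that unfolding \<Psi>_def by auto
      then have "sat S UNIV \<psi> ?U = sat S UNIV \<psi> (override_on v ((!) x) {..<k})"
        and "sat S UNIV \<psi> (?U \<circ> swap_blocks k) = sat S UNIV \<psi> (override_on v ((!) y) {..<k})"
        using override_append_swap_blocks[OF xy(1,2)] by (auto intro!: sat_cong)
      then show ?thesis
        using 2 xy(4) by (simp add: swap_inv_def sat_rename)
    qed
  qed
  then show ?thesis
    by blast
qed

lemma indisc_swap_invariant_realization:
  assumes "monster S K" "indisc S k I" "i \<noteq> j" "countable (v ` {2 * k..})"
  shows "\<exists>U. (\<forall>n\<ge>2 * k. U n = v n)
    \<and> (\<forall>\<theta>. wf S \<theta> \<longrightarrow> fv \<theta> \<subseteq> {..<2 * k} \<longrightarrow> (sat S UNIV \<theta> U \<longleftrightarrow> sat S UNIV \<theta> ((!) (I i @ I j))))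
    \<and> (\<forall>\<psi>. wf S \<psi> \<longrightarrow> fv \<psi> \<inter> {k..<2 * k} = {} \<longrightarrow> (sat S UNIV \<psi> U \<longleftrightarrow> sat S UNIV \<psi> (U \<circ> swap_blocks k)))"
proof -
  have "\<forall>\<phi>\<in>swap_type S k (I i @ I j). wf S \<phi>"
    unfolding swap_type_def by auto
  then obtain w where w: "\<forall>\<phi>\<in>swap_type S k (I i @ I j). sat S UNIV \<phi> (override_on v w {..<2 * k})"
    using monster_realize[OF assms(1,4) _ indisc_swap_type_fin_sat[OF assms(2,3)]] by blast
  define U where "U = override_on v w {..<2 * k}"
  have "sat S UNIV \<theta> U \<longleftrightarrow> sat S UNIV \<theta> ((!) (I i @ I j))"
    if "wf S \<theta>" "fv \<theta> \<subseteq> {..<2 * k}" for \<theta>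
    using w that unfolding U_def swap_type_def
    by (cases "sat S UNIV \<theta> ((!) (I i @ I j))") (auto dest!: bspec[of _ _ "Neg \<theta>"])
  moreover have "sat S UNIV \<psi> U \<longleftrightarrow> sat S UNIV \<psi> (U \<circ> swap_blocks k)"
    if "wf S \<psi>" "fv \<psi> \<inter> {k..<2 * k} = {}" for \<psi>
  proof -
    have "Iff \<psi> (rename (swap_blocks k) \<psi>) \<in> swap_type S k (I i @ I j)"
      unfolding swap_type_def using that by blast
    then have "sat S UNIV (Iff \<psi> (rename (swap_blocks k) \<psi>)) U"
      using w unfolding U_def by blast
    then show ?thesis
      by (simp add: sat_rename)
  qed
  moreover have "\<forall>n\<ge>2 * k. U n = v n"
    unfolding U_def by simp
  ultimately show ?thesis
    by blast
qed

lemma same_type_over_emptyI: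
  assumes "length c = length d"
    and "\<And>\<theta>. wf S \<theta> \<Longrightarrow> fv \<theta> \<subseteq> {..<length c} \<Longrightarrow> sat S UNIV \<theta> ((!) c) \<longleftrightarrow> sat S UNIV \<theta> ((!) d)"
  shows "same_type_over S {} c d"
proof -
  have "sat S UNIV \<theta> (override_on e ((!) c) {..<length c}) \<longleftrightarrow>
      sat S UNIV \<theta> (override_on e ((!) d) {..<length c})"
    if "wf S \<theta>" "\<forall>n\<in>fv \<theta>. length c \<le> n \<longrightarrow> e n \<in> {}" for \<theta> e
  proof -
    have fv: "fv \<theta> \<subseteq> {..<length c}"
      using that(2) by force
    then have "sat S UNIV \<theta> (override_on e ((!) x) {..<length c}) \<longleftrightarrow> sat S UNIV \<theta> ((!) x)" for x
      by (intro sat_cong) auto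
    then show ?thesis
      using assms(2)[OF that(1) fv] by simp
  qed
  then show ?thesis
    unfolding same_type_over_def using assms(1) by simp
qed

text \<open>A formula with parameters is renamed so that it avoids the second block, where swap
  invariance applies.\<close>
lemma swap_invariant_same_type_over:
  assumes params: "\<forall>a\<in>N. \<exists>p\<ge>2 * k. U p = a"
    and swap_inv: "\<And>\<psi>. wf S \<psi> \<Longrightarrow> fv \<psi> \<inter> {k..<2 * k} = {} \<Longrightarrow>
      sat S UNIV \<psi> U \<longleftrightarrow> sat S UNIV \<psi> (U \<circ> swap_blocks k)"
  shows "same_type_over S N (map U [0..<k]) (map U [k..<2 * k])"
proof -
  let ?c = "map U [0..<k]" and ?d = "map U [k..<2 * k]"
  have "sat S UNIV \<phi> (override_on e ((!) ?c) {..<k}) \<longleftrightarrow> sat S UNIV \<phi> (override_on e ((!) ?d) {..<k})"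
    if "wf S \<phi>" "\<forall>n\<in>fv \<phi>. k \<le> n \<longrightarrow> e n \<in> N" for \<phi> e
  proof -
    define \<rho> where "\<rho> n = (if n < k then n else SOME p. 2 * k \<le> p \<and> U p = e n)" for n
    have \<rho>: "2 * k \<le> \<rho> n \<and> U (\<rho> n) = e n" if "n \<in> fv \<phi>" "\<not> n < k" for n
    proof -
      have "\<exists>p. 2 * k \<le> p \<and> U p = e n"
        using params \<open>\<forall>n\<in>fv \<phi>. k \<le> n \<longrightarrow> e n \<in> N\<close> that by auto
      then have "2 * k \<le> (SOME p. 2 * k \<le> p \<and> U p = e n) \<and> U (SOME p. 2 * k \<le> p \<and> U p = e n) = e n"
        by (rule someI_ex)
      then show ?thesis
        unfolding \<rho>_def using that(2) by simp
    qed
    have "fv (rename \<rho> \<phi>) \<inter> {k..<2 * k} = {}"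
      using fv_rename[of \<rho> \<phi>] \<rho> by (fastforce simp: \<rho>_def)
    then have "sat S UNIV \<phi> (U \<circ> \<rho>) \<longleftrightarrow> sat S UNIV \<phi> (U \<circ> swap_blocks k \<circ> \<rho>)"
      using swap_inv[of "rename \<rho> \<phi>"] that(1) by (simp add: sat_rename comp_assoc)
    moreover have "U (\<rho> n) = override_on e ((!) ?c) {..<k} n" if "n \<in> fv \<phi>" for n
      using \<rho>[OF that] by (cases "n < k") (simp_all add: \<rho>_def)
    then have "sat S UNIV \<phi> (U \<circ> \<rho>) \<longleftrightarrow> sat S UNIV \<phi> (override_on e ((!) ?c) {..<k})"
      by (intro sat_cong ballI) simp
    moreover have "U (swap_blocks k (\<rho> n)) = override_on e ((!) ?d) {..<k} n" if "n \<in> fv \<phi>" for n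
      using \<rho>[OF that] by (cases "n < k") (simp_all add: \<rho>_def swap_blocks_def add.commute)
    then have "sat S UNIV \<phi> (U \<circ> swap_blocks k \<circ> \<rho>) \<longleftrightarrow> sat S UNIV \<phi> (override_on e ((!) ?d) {..<k})"
      by (intro sat_cong ballI) simp
    ultimately show ?thesis
      by simp
  qed
  then show ?thesis
    unfolding same_type_over_def by simp
qed

lemma indisc_pair_same_type_over:
  assumes "monster S K" "indisc S k I" "i \<noteq> j" "countable N"
  shows "\<exists>c d. same_type_over S {} (c @ d) (I i @ I j) \<and> same_type_over S N c d"
proof -
  define v where "v n = from_nat_into N (n - 2 * k)" for n
  have "countable (v ` {2 * k..})"
    by (intro countable_image) simp
  then obtain U where U_v: "\<forall>n\<ge>2 * k. U n = v n"
    and U_type: "\<And>\<theta>. wf S \<theta> \<Longrightarrow> fv \<theta> \<subseteq> {..<2 * k} \<Longrightarrow>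
      sat S UNIV \<theta> U \<longleftrightarrow> sat S UNIV \<theta> ((!) (I i @ I j))"
    and U_swap: "\<And>\<psi>. wf S \<psi> \<Longrightarrow> fv \<psi> \<inter> {k..<2 * k} = {} \<Longrightarrow>
      sat S UNIV \<psi> U \<longleftrightarrow> sat S UNIV \<psi> (U \<circ> swap_blocks k)"
    using indisc_swap_invariant_realization[OF assms(1-3)] by blast
  have "\<exists>p\<ge>2 * k. U p = a" if "a \<in> N" for a
  proof -
    obtain m where "from_nat_into N m = a"
      using from_nat_into_surj[OF assms(4) \<open>a \<in> N\<close>] by blast
    then show ?thesis
      using U_v unfolding v_def by (intro exI[of _ "m + 2 * k"]) simp
  qed
  then have "same_type_over S N (map U [0..<k]) (map U [k..<2 * k])"
    using U_swap by (intro swap_invariant_same_type_over) blast+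
  moreover have "same_type_over S {} (map U [0..<2 * k]) (I i @ I j)"
  proof (rule same_type_over_emptyI)
    show "length (map U [0..<2 * k]) = length (I i @ I j)"
      using assms(2) unfolding indisc_def by simp
    fix \<theta> assume "wf S \<theta>" "fv \<theta> \<subseteq> {..<length (map U [0..<2 * k])}"
    then have "sat S UNIV \<theta> ((!) (map U [0..<2 * k])) \<longleftrightarrow> sat S UNIV \<theta> U"
      by (intro sat_cong) auto
    then show "sat S UNIV \<theta> ((!) (map U [0..<2 * k])) \<longleftrightarrow> sat S UNIV \<theta> ((!) (I i @ I j))"
      using U_type \<open>wf S \<theta>\<close> \<open>fv \<theta> \<subseteq> {..<length (map U [0..<2 * k])}\<close> by simp
  qed
  moreover have "map U [0..<k] @ map U [k..<2 * k] = map U [0..<2 * k]"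
    unfolding mult_2 by (simp add: upt_add_eq_append[OF le0])
  ultimately show ?thesis
    by metis
qed

lemma ledge_Autf:
  fixes S :: "('f, 'r, 'a, 'z) mstruct_scheme"
  assumes "countable (UNIV :: 'f set)" "countable (UNIV :: 'r set)" "monster S K" "ledge S k c d"
  shows "\<exists>\<sigma>\<in>Autf S K. map \<sigma> c = d"
proof -
  obtain I i j where I: "indisc S k I" "I i = c" "I j = d" and "c \<noteq> d"
    using assms(4) unfolding ledge_def by blast
  then have "i \<noteq> j" "length c = length d"
    unfolding indisc_def by auto
  obtain N where N: "countable N" "elem_sub S N"
    using countable_elem_sub_closure[OF assms(1,2), of "\<lambda>_. {}" "{}"] by auto
  obtain c' d' where c'd': "same_type_over S {} (c' @ d') (c @ d)" "same_type_over S N c' d'"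
    using indisc_pair_same_type_over[OF assms(3) I(1) \<open>i \<noteq> j\<close> N(1)] I by blast
  have homog: "homogeneous S K"
    using assms(3) unfolding monster_def by simp
  have "small K ({} \<union> set (c' @ d'))"
    by (intro monster_small_countable[OF assms(3)]) (simp add: countable_finite)
  then obtain h where h: "is_aut S h" "map h (c' @ d') = c @ d"
    using aut_of_same_type_over[OF homog _ c'd'(1)] by blast
  moreover have "length (map h c') = length c"
    using c'd' \<open>length c = length d\<close> unfolding same_type_over_def by simp
  ultimately have "map h c' = c" "map h d' = d"
    by simp_all
  then have "same_type_over S (h ` N) c d"
    using same_type_over_aut[OF h(1) c'd'(2)] by simp
  moreover have "small K (h ` N \<union> set c)"
    using N(1) by (intro monster_small_countable[OF assms(3)]) (simp add: countable_finite)
  ultimately obtain \<sigma> where \<sigma>: "is_aut S \<sigma>" "\<forall>x\<in>h ` N. \<sigma> x = x" "map \<sigma> c = d"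
    using aut_of_same_type_over[OF homog] by blast
  have "\<sigma> \<in> Autf S K"
    using N monster_small_countable[OF assms(3)]
    by (intro Autf.gen[OF \<sigma>(1) elem_sub_aut[OF h(1) N(2)] _ \<sigma>(2)]) simp
  then show ?thesis
    using \<sigma>(3) by blast
qed

lemma lpath_Autf:
  fixes S :: "('f, 'r, 'a, 'z) mstruct_scheme"
  assumes "countable (UNIV :: 'f set)" "countable (UNIV :: 'r set)" "monster S K"
  shows "lpath S k n c d \<Longrightarrow> \<exists>\<sigma>\<in>Autf S K. map \<sigma> c = d"
proof (induction n arbitrary: d)
  case 0
  then have "map id c = d"
    by simp
  then show ?case
    using Autf.ident by blast
next
  case (Suc n)
  show ?case
  proof (cases "lpath S k n c d")
    case True
    then show ?thesis
      by (rule Suc.IH)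
  next
    case False
    then obtain e where "lpath S k n c e" "ledge S k e d"
      using Suc.prems by auto
    then obtain \<sigma> \<tau> where "\<sigma> \<in> Autf S K" "map \<sigma> c = e" "\<tau> \<in> Autf S K" "map \<tau> e = d"
      using Suc.IH ledge_Autf[OF assms] by blast
    then have "\<tau> \<circ> \<sigma> \<in> Autf S K" "map (\<tau> \<circ> \<sigma>) c = d"
      by (auto intro: Autf.comp)
    then show ?thesis
      by blast
  qed
qed

section \<open>Nice models\<close>

lemma lpath_mono: "lpath S k m c d \<Longrightarrow> m \<le> m' \<Longrightarrow> lpath S k m' c d"
  by (induction m') (auto simp: le_Suc_eq)

lemma bounds_mono: "bounds S m \<sigma> \<Longrightarrow> m \<le> m' \<Longrightarrow> bounds S m' \<sigma>"
  unfolding bounds_def using lpath_mono by blast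

lemma exists_least_bound_Autf:
  assumes "\<exists>\<tau>\<in>Autf S K. map \<tau> a = b"
  shows "\<exists>\<sigma>\<in>Autf S K. map \<sigma> a = b \<and>
    (\<forall>\<tau>\<in>Autf S K. map \<tau> a = b \<longrightarrow> (\<forall>m. bounds S m \<tau> \<longrightarrow> bounds S m \<sigma>))"
proof (cases "\<exists>m. \<exists>\<tau>\<in>Autf S K. map \<tau> a = b \<and> bounds S m \<tau>")
  case True
  define m0 where "m0 = (LEAST m. \<exists>\<tau>\<in>Autf S K. map \<tau> a = b \<and> bounds S m \<tau>)"
  obtain \<sigma> where \<sigma>: "\<sigma> \<in> Autf S K" "map \<sigma> a = b" "bounds S m0 \<sigma>"
    using LeastI_ex[OF True] unfolding m0_def by blast
  have "bounds S m \<sigma>" if "\<tau> \<in> Autf S K" "map \<tau> a = b" "bounds S m \<tau>" for \<tau> m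
  proof -
    have "m0 \<le> m"
      unfolding m0_def using that by (intro Least_le) blast
    then show ?thesis
      using \<sigma>(3) bounds_mono by blast
  qed
  then show ?thesis
    using \<sigma> by blast
next
  case False
  then show ?thesis
    using assms by blast
qed

definition least_bound_Autf :: "('f, 'r, 'a, 'z) mstruct_scheme \<Rightarrow> 'k set \<Rightarrow> 'a list \<Rightarrow> 'a list \<Rightarrow> 'a \<Rightarrow> 'a" where
  "least_bound_Autf S K a b = (SOME \<sigma>. \<sigma> \<in> Autf S K \<and> map \<sigma> a = b \<and>
      (\<forall>\<tau>\<in>Autf S K. map \<tau> a = b \<longrightarrow> (\<forall>m. bounds S m \<tau> \<longrightarrow> bounds S m \<sigma>)))"

lemma least_bound_Autf:
  assumes "\<exists>\<tau>\<in>Autf S K. map \<tau> a = b"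
  shows "least_bound_Autf S K a b \<in> Autf S K \<and> map (least_bound_Autf S K a b) a = b \<and>
    (\<forall>\<tau>\<in>Autf S K. map \<tau> a = b \<longrightarrow> (\<forall>m. bounds S m \<tau> \<longrightarrow> bounds S m (least_bound_Autf S K a b)))"
  using exists_least_bound_Autf[OF assms] unfolding least_bound_Autf_def Bex_def
  by (rule someI_ex)

definition lascar_far :: "('f, 'r, 'a, 'z) mstruct_scheme \<Rightarrow> 'a list \<Rightarrow> nat \<Rightarrow> 'a list \<Rightarrow> 'a list \<Rightarrow> bool" where
  "lascar_far S a n c1 c2 \<longleftrightarrow> length c1 = length a \<and> length c2 = length a
     \<and> lascar_eq S (length a) c1 a \<and> lascar_eq S (length a) a c2 \<and> \<not> lpath S (length a) n c1 c2"

text \<open>When no witness exists, \<open>SOME\<close> picks arbitrary lists, which is harmless.\<close>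
definition nice_witnesses :: "('f, 'r, 'a, 'z) mstruct_scheme \<Rightarrow> 'k set \<Rightarrow> 'a list \<Rightarrow> 'a list \<Rightarrow> 'a list \<Rightarrow> 'a set" where
  "nice_witnesses S K a b c =
     least_bound_Autf S K a b ` set c \<union> inv (least_bound_Autf S K a b) ` set c
     \<union> (\<Union>n. let p = SOME p. lascar_far S a n (fst p) (snd p) in set (fst p) \<union> set (snd p))
     \<union> (\<Union>n. set (SOME b'. length b' = length c \<and> lpath S (length a + length c) n (a @ c) (b @ b')))"

definition nice_closed :: "('f, 'r, 'a, 'z) mstruct_scheme \<Rightarrow> 'k set \<Rightarrow> 'a set \<Rightarrow> bool" where
  "nice_closed S K M \<longleftrightarrow>
     (\<forall>a b c. set a \<subseteq> M \<longrightarrow> set b \<subseteq> M \<longrightarrow> set c \<subseteq> M \<longrightarrow> nice_witnesses S K a b c \<subseteq> M)"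

lemma exists_nice_closed:
  fixes S :: "('f, 'r, 'a, 'z) mstruct_scheme" and K :: "'k set"
  assumes "countable (UNIV :: 'f set)" "countable (UNIV :: 'r set)" "countable A"
  shows "\<exists>M. A \<subseteq> M \<and> countable M \<and> elem_sub S M \<and> nice_closed S K M"
proof -
  define G where "G xs = (\<Union>i j. nice_witnesses S K (take i xs) (take j (drop i xs)) (drop (i + j) xs))"
    for xs
  have "countable (nice_witnesses S K a b c)" for a b c
    unfolding nice_witnesses_def Let_def by (simp add: countable_finite)
  then have "countable (G xs)" for xs
    unfolding G_def by (intro countable_UN) simp_all
  then have "\<exists>M. A \<subseteq> M \<and> countable M \<and> elem_sub S M \<and> (\<forall>xs. set xs \<subseteq> M \<longrightarrow> G xs \<subseteq> M)"
    by (rule countable_elem_sub_closure[OF assms(1,2) _ assms(3)])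
  then obtain M where M: "A \<subseteq> M" "countable M" "elem_sub S M" "\<forall>xs. set xs \<subseteq> M \<longrightarrow> G xs \<subseteq> M"
    by (elim exE conjE)
  have "nice_witnesses S K a b c \<subseteq> M" if "set a \<subseteq> M" "set b \<subseteq> M" "set c \<subseteq> M" for a b c
  proof -
    have "nice_witnesses S K a b c = nice_witnesses S K (take (length a) (a @ b @ c))
        (take (length b) (drop (length a) (a @ b @ c))) (drop (length a + length b) (a @ b @ c))"
      by simp
    then have "nice_witnesses S K a b c \<subseteq> G (a @ b @ c)"
      unfolding G_def by blast
    also have "\<dots> \<subseteq> M"
      using M(4) that by simp
    finally show ?thesis .
  qed
  then have "nice_closed S K M"
    unfolding nice_closed_def by blast
  then show ?thesis
    using M by blast
qed

lemma nice_closed_Autf: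
  fixes S :: "('f, 'r, 'a, 'z) mstruct_scheme"
  assumes "countable (UNIV :: 'f set)" "countable (UNIV :: 'r set)" "monster S K"
    and "nice_closed S K M" "set a \<subseteq> M" "set b \<subseteq> M" "lascar_eq S (length a) a b"
  shows "\<exists>\<sigma>\<in>Autf S K. \<sigma> ` M = M \<and> map \<sigma> a = b \<and>
    (\<forall>\<tau>\<in>Autf S K. map \<tau> a = b \<longrightarrow> (\<forall>m. bounds S m \<tau> \<longrightarrow> bounds S m \<sigma>))"
proof -
  let ?\<sigma> = "least_bound_Autf S K a b"
  have \<sigma>: "?\<sigma> \<in> Autf S K \<and> map ?\<sigma> a = b \<and>
      (\<forall>\<tau>\<in>Autf S K. map \<tau> a = b \<longrightarrow> (\<forall>m. bounds S m \<tau> \<longrightarrow> bounds S m ?\<sigma>))"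
    using assms(7) lpath_Autf[OF assms(1-3)] unfolding lascar_eq_def
    by (intro least_bound_Autf) blast
  have closed: "?\<sigma> x \<in> M \<and> inv ?\<sigma> x \<in> M" if "x \<in> M" for x
  proof -
    have "nice_witnesses S K a b [x] \<subseteq> M"
      using assms(4-6) that unfolding nice_closed_def by simp
    then show ?thesis
      unfolding nice_witnesses_def by simp
  qed
  have "bij ?\<sigma>"
    using \<sigma> Autf_bij by blast
  then have "?\<sigma> (inv ?\<sigma> x) = x" for x
    by (simp add: bij_is_surj surj_f_inv_f)
  then have "?\<sigma> ` M = M"
    using closed by (metis image_eqI image_subset_iff subsetI subset_antisym)
  then show ?thesis
    using \<sigma> by blast
qed

lemma nice_closed_lascar_far:
  assumes "nice_closed S K M" "set a \<subseteq> M" "\<exists>c1 c2. lascar_far S a n c1 c2"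
  shows "\<exists>c1 c2. set c1 \<subseteq> M \<and> set c2 \<subseteq> M \<and> lascar_far S a n c1 c2"
proof -
  define p where "p = (SOME p. lascar_far S a n (fst p) (snd p))"
  have "lascar_far S a n (fst p) (snd p)"
    unfolding p_def using assms(3) by (intro someI_ex[of "\<lambda>p. lascar_far S a n (fst p) (snd p)"]) auto
  moreover have "set (fst p) \<union> set (snd p) \<subseteq> nice_witnesses S K a [] []"
    unfolding nice_witnesses_def p_def Let_def by blast
  moreover have "nice_witnesses S K a [] [] \<subseteq> M"
    using assms(1,2) unfolding nice_closed_def by simp
  ultimately show ?thesis
    by (meson le_sup_iff subset_trans)
qed

lemma nice_closed_lpath_extension:
  assumes "nice_closed S K M" "set a \<subseteq> M" "set b \<subseteq> M" "set a' \<subseteq> M"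
    and "\<exists>b'. length b' = length a' \<and> lpath S (length a + length a') n (a @ a') (b @ b')"
  shows "\<exists>b'. set b' \<subseteq> M \<and> length b' = length a' \<and> lpath S (length a + length a') n (a @ a') (b @ b')"
proof -
  define b' where "b' = (SOME b'. length b' = length a' \<and> lpath S (length a + length a') n (a @ a') (b @ b'))"
  have "length b' = length a' \<and> lpath S (length a + length a') n (a @ a') (b @ b')"
    unfolding b'_def using assms(5) by (rule someI_ex)
  moreover have "set b' \<subseteq> nice_witnesses S K a b a'"
    unfolding nice_witnesses_def b'_def by blast
  moreover have "nice_witnesses S K a b a' \<subseteq> M"
    using assms(1-4) unfolding nice_closed_def by simp
  ultimately show ?thesis
    by blast
qed

lemma nice_if_nice_closed:
  fixes S :: "('f, 'r, 'a, 'z) mstruct_scheme"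
  assumes "countable (UNIV :: 'f set)" "countable (UNIV :: 'r set)" "monster S K"
    and "elem_sub S M" "countable M" "nice_closed S K M"
  shows "nice S K M"
  unfolding nice_def
proof (intro conjI allI impI)
  fix a b
  assume "set a \<subseteq> M" "set b \<subseteq> M" "length a = length b" "lascar_eq S (length a) a b"
  then show "\<exists>\<sigma>\<in>Autf S K. \<sigma> ` M = M \<and> map \<sigma> a = b \<and>
      (\<forall>\<tau>\<in>Autf S K. map \<tau> a = b \<longrightarrow> (\<forall>m. bounds S m \<tau> \<longrightarrow> bounds S m \<sigma>))"
    using nice_closed_Autf[OF assms(1-3,6)] by blast
next
  fix a n
  assume "set a \<subseteq> M" "\<exists>c1 c2. length c1 = length a \<and> length c2 = length a
    \<and> lascar_eq S (length a) c1 a \<and> lascar_eq S (length a) a c2 \<and> \<not> lpath S (length a) n c1 c2"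
  then show "\<exists>c1 c2. set c1 \<subseteq> M \<and> set c2 \<subseteq> M \<and> length c1 = length a \<and> length c2 = length a
    \<and> lascar_eq S (length a) c1 a \<and> lascar_eq S (length a) a c2 \<and> \<not> lpath S (length a) n c1 c2"
    using nice_closed_lascar_far[OF assms(6)] unfolding lascar_far_def by presburger
next
  fix a b a' n
  assume "set a \<subseteq> M" "set b \<subseteq> M" "set a' \<subseteq> M" "length a = length b"
    "\<exists>b'. length b' = length a' \<and> lpath S (length a + length a') n (a @ a') (b @ b')"
  then show "\<exists>b'. set b' \<subseteq> M \<and> length b' = length a' \<and> lpath S (length a + length a') n (a @ a') (b @ b')"
    using nice_closed_lpath_extension[OF assms(6)] by blast
qed (use assms in simp_all)

theorem lemma3p3:
  fixes S :: "('f, 'r, 'a) mstruct" and K :: "'k set" and A :: "'a set"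
  assumes "countable (UNIV :: 'f set)" and "countable (UNIV :: 'r set)"
    and "monster S K"
    and "countable A"
  shows "(\<exists>M. nice S K M \<and> A \<subseteq> M) \<and> (\<exists>M. nice S K M)"
proof -
  obtain M where "A \<subseteq> M" "countable M" "elem_sub S M" "nice_closed S K M"
    using exists_nice_closed[OF assms(1,2,4)] by blast
  then have "nice S K M" "A \<subseteq> M"
    using nice_if_nice_closed[OF assms(1-3)] by blast+
  then show ?thesis
    by blast
qed

end
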